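(* Let $c\in\mathbb{N}$ and $I=\mathbb{N}\times[c]$. Then every $\mathrm{Sym}$-invariant lattice $L\subseteq\mathbb{Z}^{(I)}$ has (i) a finite equivariant universal Gröbner basis, (ii) a finite equivariant Gröbner basis with respect to an arbitrary term order on $\mathbb{Z}_{\ge0}^{(I)}$, (iii) a finite equivariant Markov basis, and (iv) a finite equivariant generating set.
   Context: $\mathbb{N}=\{1,2,\dots\}$. $\mathbb{Z}^{(I)}$ is the free abelian group with basis $I$ (standard basis $\mathbf{e}_{i,j}$), $\mathbb{Z}_{\ge0}^{(I)}$ its nonnegative vectors; a lattice is a subgroup. $\mathrm{Sym}$ is the group of permutations of $\mathbb{N}$ fixing all but finitely many points, acting by linear extension of $\sigma(\mathbf{e}_{i,j})=\mathbf{e}_{\sigma(i),j}$. Term order: additive well-ordering of $\mathbb{Z}_{\ge0}^{(I)}$. For $\mathbf{u}\in\mathbb{Z}_{\ge0}^{(I)}$, $F_L(\mathbf{u})=\{\mathbf{v}\ge\mathbf{0}\mid\mathbf{u}-\mathbf{v}\in L\}$. For $\mathcal{B}\subseteq L$: generating set = generates $L$ as a group; Markov basis = for all $\mathbf{u}$, the graph on $F_L(\mathbf{u})$ with edges $\{\mathbf{v},\mathbf{w}\}$ for $\mathbf{v}-\mathbf{w}\in\pm\mathcal{B}$ is connected; Gröbner basis w.r.t. $\prec$ = for all $\mathbf{u}$ there is a directed path from $\mathbf{u}$ to the $\prec$-minimal element of $F_L(\mathbf{u})$ along edges $\mathbf{v}\to\mathbf{w}$ with $\mathbf{v}-\mathbf{w}\in\pm\mathcal{B}$,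 $\mathbf{w}\prec\mathbf{v}$; universal Gröbner basis = Gröbner basis w.r.t. all term orders. $\mathcal{B}$ is an equivariant X (for each of these notions) if $\mathrm{Sym}(\mathcal{B})=\{\sigma(\mathbf{b})\mid\sigma\in\mathrm{Sym},\mathbf{b}\in\mathcal{B}\}$ is an X. *)

theory Defs
  imports Main "HOL-Library.Function_Algebras" "HOL-Combinatorics.Permutations"
begin

text \<open>Vectors of Z^(I) are represented as functions nat \<times> nat \<Rightarrow> int with finite support
  contained in I = {1,2,...} \<times> {1..c}.  Group operations are pointwise.\<close>

type_synonym vec = "nat \<times> nat \<Rightarrow> int"

definition index_set :: "nat \<Rightarrow> (nat \<times> nat) set" where
  "index_set c = {1..} \<times> {1..c}"

definition ZI :: "nat \<Rightarrow> vec set" where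
  "ZI c = {v. finite {x. v x \<noteq> 0} \<and> (\<forall>x. v x \<noteq> 0 \<longrightarrow> x \<in> index_set c)}"

definition ZI_nonneg :: "nat \<Rightarrow> vec set" where
  "ZI_nonneg c = {v \<in> ZI c. \<forall>x. 0 \<le> v x}"

definition is_subgroup :: "vec set \<Rightarrow> bool" where
  "is_subgroup H \<longleftrightarrow> 0 \<in> H \<and> (\<forall>a\<in>H. \<forall>b\<in>H. a - b \<in> H)"

definition is_lattice :: "nat \<Rightarrow> vec set \<Rightarrow> bool" where
  "is_lattice c L \<longleftrightarrow> L \<subseteq> ZI c \<and> is_subgroup L"

definition gen_subgroup :: "vec set \<Rightarrow> vec set" where
  "gen_subgroup B = \<Inter> {H. is_subgroup H \<and> B \<subseteq> H}"

definition Sym :: "(nat \<Rightarrow> nat) set" where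
  "Sym = {\<sigma>. \<sigma> permutes {1..} \<and> finite {i. \<sigma> i \<noteq> i}}"

text \<open>sigma(e_(i,j)) = e_(sigma i, j), extended linearly.\<close>
definition act :: "(nat \<Rightarrow> nat) \<Rightarrow> vec \<Rightarrow> vec" where
  "act \<sigma> v = (\<lambda>(k, j). v (inv \<sigma> k, j))"

definition sym_invariant :: "vec set \<Rightarrow> bool" where
  "sym_invariant L \<longleftrightarrow> (\<forall>\<sigma>\<in>Sym. \<forall>v\<in>L. act \<sigma> v \<in> L)"

definition sym_orbit :: "vec set \<Rightarrow> vec set" where
  "sym_orbit B = {act \<sigma> b | \<sigma> b. \<sigma> \<in> Sym \<and> b \<in> B}"

definition term_order :: "nat \<Rightarrow> (vec \<Rightarrow> vec \<Rightarrow> bool) \<Rightarrow> bool" where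
  "term_order c lt \<longleftrightarrow>
     (\<forall>u v. lt u v \<longrightarrow> u \<in> ZI_nonneg c \<and> v \<in> ZI_nonneg c) \<and>
     (\<forall>u. \<not> lt u u) \<and>
     (\<forall>u v w. lt u v \<longrightarrow> lt v w \<longrightarrow> lt u w) \<and>
     (\<forall>u\<in>ZI_nonneg c. \<forall>v\<in>ZI_nonneg c. u \<noteq> v \<longrightarrow> lt u v \<or> lt v u) \<and>
     wfP lt \<and>
     (\<forall>u\<in>ZI_nonneg c. \<forall>v\<in>ZI_nonneg c. \<forall>w\<in>ZI_nonneg c. lt u v \<longrightarrow> lt (u + w) (v + w))"

definition fiber :: "nat \<Rightarrow> vec set \<Rightarrow> vec \<Rightarrow> vec set" where
  "fiber c L u = {v \<in> ZI_nonneg c. u - v \<in> L}"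

definition is_generating_set :: "nat \<Rightarrow> vec set \<Rightarrow> vec set \<Rightarrow> bool" where
  "is_generating_set c L B \<longleftrightarrow> B \<subseteq> L \<and> gen_subgroup B = L"

definition is_markov_basis :: "nat \<Rightarrow> vec set \<Rightarrow> vec set \<Rightarrow> bool" where
  "is_markov_basis c L B \<longleftrightarrow> B \<subseteq> L \<and>
     (\<forall>u\<in>ZI_nonneg c. \<forall>v\<in>fiber c L u. \<forall>w\<in>fiber c L u.
        (v, w) \<in> {(x, y). x \<in> fiber c L u \<and> y \<in> fiber c L u \<and> (x - y \<in> B \<or> y - x \<in> B)}\<^sup>*)"

definition is_groebner_basis :: "nat \<Rightarrow> (vec \<Rightarrow> vec \<Rightarrow> bool) \<Rightarrow> vec set \<Rightarrow> vec set \<Rightarrow> bool" where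
  "is_groebner_basis c lt L B \<longleftrightarrow> B \<subseteq> L \<and>
     (\<forall>u\<in>ZI_nonneg c. \<forall>m\<in>fiber c L u. (\<forall>v\<in>fiber c L u. v \<noteq> m \<longrightarrow> lt m v) \<longrightarrow>
        (u, m) \<in> {(x, y). x \<in> fiber c L u \<and> y \<in> fiber c L u \<and> (x - y \<in> B \<or> y - x \<in> B) \<and> lt y x}\<^sup>*)"

definition is_universal_groebner_basis :: "nat \<Rightarrow> vec set \<Rightarrow> vec set \<Rightarrow> bool" where
  "is_universal_groebner_basis c L B \<longleftrightarrow>
     (\<forall>lt. term_order c lt \<longrightarrow> is_groebner_basis c lt L B)"

end

theory Submission
  imports Defs "HOL-Library.Ramsey" "HOL-Library.Sublist"
begin

text \<open>
  Call u \<sqsubseteq> v (conformal) if every entry u x lies between 0 and v x. Up to the action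
  of Sym this order is almost full on Z^(I): Dickson's lemma makes it almost full on columns in
  Z^c, Higman's lemma (by Nash-Williams' minimal bad sequence argument) lifts this to the lists
  of nonzero columns of vectors, and an embedding of such lists is an injection of column indices,
  which extends to a finitary permutation. Hence there is a finite set B of nonzero elements of L
  such that every nonzero l \<in> L lies conformally above some \<sigma> b, i.e. G = Sym(B)
  conformally covers L - {0}.

  Subtracting g \<sqsubseteq> v - w from v stays in the fiber of v
  and lowers the l1-norm of v - w, which connects fibers and writes every l \<in> L as a sum of
  elements of G. For a term order, if the positive part of l is the leading term of its binomial,
  the same holds for some g \<sqsubseteq> l: positive and negative parts split additively along
  l = g + (l - g), so g or l - g qualifies, and in the second case one recurses on l - g. Reducing
  a non-minimal element x of a fiber by such a g for l = x - m, with m the minimum, gives a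
  smaller element of the fiber.
\<close>

section \<open>Almost-full relations\<close>

definition good :: "('a \<Rightarrow> 'a \<Rightarrow> bool) \<Rightarrow> (nat \<Rightarrow> 'a) \<Rightarrow> bool" where
  "good P f \<longleftrightarrow> (\<exists>i j. i < j \<and> P (f i) (f j))"

definition almost_full_on :: "('a \<Rightarrow> 'a \<Rightarrow> bool) \<Rightarrow> 'a set \<Rightarrow> bool" where
  "almost_full_on P A \<longleftrightarrow> (\<forall>f. (\<forall>i. f i \<in> A) \<longrightarrow> good P f)"

lemma almost_full_onD:
  fixes f :: "nat \<Rightarrow> 'a"
  assumes "almost_full_on P A" "\<And>i. f i \<in> A"
  obtains i j where "i < j" "P (f i) (f j)"
proof -
  have "good P f"
    using assms unfolding almost_full_on_def by blast
  then show thesis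
    using that unfolding good_def by blast
qed

lemma ex_seq_rec_history: "\<exists>s :: nat \<Rightarrow> 'a. \<forall>n. s n = F (map s [0..<n])"
proof -
  define pre where "pre = rec_nat [] (\<lambda>_ xs. xs @ [F xs])"
  have pre_0: "pre 0 = []" and pre_Suc: "pre (Suc n) = pre n @ [F (pre n)]" for n
    by (simp_all add: pre_def)
  have "pre n = map (\<lambda>k. F (pre k)) [0..<n]" for n
    by (induction n) (simp_all add: pre_0 pre_Suc)
  then show ?thesis
    by (intro exI[of _ "\<lambda>k. F (pre k)"]) metis
qed

lemma almost_full_on_finite_basis:
  assumes "almost_full_on R S"
  obtains B where "finite B" "B \<subseteq> S" "\<And>s. s \<in> S \<Longrightarrow> \<exists>b\<in>B. R b s"
proof (rule ccontr)
  note basis = that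
  assume "\<not> thesis"
  have escape: "\<exists>s\<in>S. \<forall>b\<in>B. \<not> R b s" if "finite B" "B \<subseteq> S" for B
    using basis[OF that] \<open>\<not> thesis\<close> by blast
  define F where "F = (\<lambda>xs. SOME s. s \<in> S \<and> (\<forall>b\<in>set xs. \<not> R b s))"
  obtain s where s: "\<And>n. s n = F (map s [0..<n])"
    using ex_seq_rec_history[of F] by blast
  have s_escapes: "s n \<in> S \<and> (\<forall>i<n. \<not> R (s i) (s n))" for n
  proof (induction n rule: less_induct)
    case (less n)
    then have "set (map s [0..<n]) \<subseteq> S"
      by auto
    then have "\<exists>x. x \<in> S \<and> (\<forall>b\<in>set (map s [0..<n]). \<not> R b x)"
      using escape[OF finite_set] by blast
    then have "F (map s [0..<n]) \<in> S \<and> (\<forall>b\<in>set (map s [0..<n]). \<not> R b (F (map s [0..<n])))"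
      unfolding F_def by (rule someI_ex)
    then show ?case
      by (subst (1 2) s) auto
  qed
  then obtain i j where "i < j" "R (s i) (s j)"
    using almost_full_onD[OF assms, of s] by blast
  with s_escapes show False
    by blast
qed

lemma almost_full_on_imp_homogeneous_subseq:
  fixes f :: "nat \<Rightarrow> 'a"
  assumes "almost_full_on P A" "\<And>i. f i \<in> A"
  obtains \<phi> :: "nat \<Rightarrow> nat" where "strict_mono \<phi>" "\<And>i j. i < j \<Longrightarrow> P (f (\<phi> i)) (f (\<phi> j))"
proof -
  \<comment> \<open>Ramsey: colour i < j by whether P (f i) (f j); no infinite set is monochromatic in the
    colour Suc 0, since restricting f to it would give a bad sequence.\<close>
  define col where "col = (\<lambda>X::nat set. if P (f (Min X)) (f (Max X)) then 0 else Suc 0)"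
  have "\<exists>Y t. Y \<subseteq> UNIV \<and> infinite Y \<and> t < 2 \<and> (\<forall>x\<in>Y. \<forall>y\<in>Y. x \<noteq> y \<longrightarrow> col {x, y} = t)"
    by (rule Ramsey2) (simp_all add: col_def)
  then obtain Y t where Y: "infinite Y" and hom: "\<forall>x\<in>Y. \<forall>y\<in>Y. x \<noteq> y \<longrightarrow> col {x, y} = t"
    by blast
  define \<phi> where "\<phi> = enumerate Y"
  have mono: "strict_mono \<phi>"
    using Y by (simp add: \<phi>_def strict_mono_enumerate)
  have inY: "\<phi> i \<in> Y" for i
    using Y by (simp add: \<phi>_def enumerate_in_set)
  have col_\<phi>: "col {\<phi> i, \<phi> j} = (if P (f (\<phi> i)) (f (\<phi> j)) then 0 else Suc 0)" if "i < j" for i j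
    using strict_monoD[OF mono that] by (simp add: col_def min_def max_def)
  have t: "col {\<phi> i, \<phi> j} = t" if "i < j" for i j
    using hom inY strict_monoD[OF mono that] by (metis less_irrefl)
  obtain i j where ij: "i < j" "P (f (\<phi> i)) (f (\<phi> j))"
    using assms by (rule almost_full_onD)
  then have t0: "t = 0"
    using col_\<phi>[OF ij(1)] t[OF ij(1)] by simp
  have "P (f (\<phi> i)) (f (\<phi> j))" if "i < j" for i j
    using col_\<phi>[OF that] t[OF that] t0 by (simp split: if_splits)
  with mono show thesis
    by (rule that)
qed

lemma almost_full_on_conj:
  assumes "almost_full_on P A" "almost_full_on Q A"
  shows "almost_full_on (\<lambda>x y. P x y \<and> Q x y) A"
  unfolding almost_full_on_def good_def
proof (intro allI impI)
  fix f :: "nat \<Rightarrow> 'a" assume f: "\<forall>i. f i \<in> A"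
  obtain \<phi> :: "nat \<Rightarrow> nat" where mono: "strict_mono \<phi>" and P: "\<And>i j. i < j \<Longrightarrow> P (f (\<phi> i)) (f (\<phi> j))"
    using almost_full_on_imp_homogeneous_subseq[OF assms(1)] f by blast
  obtain i j where "i < j" "Q (f (\<phi> i)) (f (\<phi> j))"
    using almost_full_onD[OF assms(2), of "f \<circ> \<phi>"] f by auto
  then show "\<exists>i j. i < j \<and> P (f i) (f j) \<and> Q (f i) (f j)"
    using P mono by (metis strict_mono_less)
qed

lemma almost_full_on_map:
  assumes "almost_full_on P A" "\<And>x. x \<in> B \<Longrightarrow> h x \<in> A"
    and "\<And>x y. x \<in> B \<Longrightarrow> y \<in> B \<Longrightarrow> P (h x) (h y) \<Longrightarrow> Q x y"
  shows "almost_full_on Q B"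
  unfolding almost_full_on_def good_def
proof (intro allI impI)
  fix f :: "nat \<Rightarrow> 'b" assume f: "\<forall>i. f i \<in> B"
  then obtain i j where "i < j" "P (h (f i)) (h (f j))"
    using almost_full_onD[OF assms(1), of "h \<circ> f"] assms(2) by auto
  then show "\<exists>i j. i < j \<and> Q (f i) (f j)"
    using assms(3) f by blast
qed

lemma almost_full_on_Un:
  assumes "almost_full_on P A" "almost_full_on P B"
  shows "almost_full_on P (A \<union> B)"
  unfolding almost_full_on_def
proof (intro allI impI)
  fix f :: "nat \<Rightarrow> 'a" assume f: "\<forall>i. f i \<in> A \<union> B"
  have good_if_often: "good P f"
    if S: "infinite S" and D: "\<forall>i\<in>S. f i \<in> D" "almost_full_on P D" for S D
  proof -
    obtain i j where "i < j" "P (f (enumerate S i)) (f (enumerate S j))"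
      using almost_full_onD[OF D(2), of "f \<circ> enumerate S"] S D(1)
      by (auto simp: enumerate_in_set)
    then show ?thesis
      unfolding good_def using S by (metis enumerate_mono)
  qed
  have "{i. f i \<in> A} \<union> {i. f i \<in> B} = UNIV"
    using f by auto
  then have "infinite {i. f i \<in> A} \<or> infinite {i. f i \<in> B}"
    by (metis finite_UnI infinite_UNIV_nat)
  then show "good P f"
    using good_if_often assms by blast
qed

lemma almost_full_on_nat_le: "almost_full_on ((\<le>) :: nat \<Rightarrow> nat \<Rightarrow> bool) UNIV"
  unfolding almost_full_on_def good_def
proof (intro allI impI)
  fix f :: "nat \<Rightarrow> nat"
  obtain i where i: "f i = (LEAST v. v \<in> range f)"
    by (metis (mono_tags, lifting) LeastI rangeE rangeI)
  have "f i \<le> f (Suc i)"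
    unfolding i by (rule Least_le) simp
  then show "\<exists>i j. i < j \<and> f i \<le> f j"
    using lessI by blast
qed

section \<open>Higman's lemma\<close>

lemma ex_minimal_bad_seq:
  fixes size :: "'a \<Rightarrow> nat"
  assumes "\<not> good P f"
  obtains m where "\<not> good P m"
    and "\<And>n g. \<not> good P g \<Longrightarrow> (\<forall>i<n. g i = m i) \<Longrightarrow> size (m n) \<le> size (g n)"
proof -
  define extends where
    "extends = (\<lambda>xs y. \<exists>g. \<not> good P g \<and> (\<forall>i<length xs. g i = xs ! i) \<and> g (length xs) = y)"
  obtain m where m: "\<And>n. m n = arg_min size (extends (map m [0..<n]))"
    using ex_seq_rec_history[of "\<lambda>xs. arg_min size (extends xs)"] by blast
  have ext: "extends (map m [0..<n]) (g n)" if "\<not> good P g" "\<forall>i<n. g i = m i" for g n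
    unfolding extends_def using that by (intro exI[of _ g]) auto
  have bad_prefix: "\<exists>g. \<not> good P g \<and> (\<forall>i<n. g i = m i)" for n
  proof (induction n)
    case 0
    show ?case
      using assms by auto
  next
    case (Suc n)
    then obtain g where "\<not> good P g" "\<forall>i<n. g i = m i"
      by blast
    then have "extends (map m [0..<n]) (g n)"
      by (rule ext)
    then have "extends (map m [0..<n]) (arg_min size (extends (map m [0..<n])))"
      by (rule arg_min_natI)
    then have "extends (map m [0..<n]) (m n)"
      by (subst m)
    then obtain g' where "\<not> good P g'" "\<forall>i<n. g' i = m i" "g' n = m n"
      unfolding extends_def by auto
    then show ?case
      by (intro exI[of _ g']) (auto simp: less_Suc_eq)
  qed
  have "\<not> good P m"
  proof
    assume "good P m"
    then obtain i j where ij: "i < j" "P (m i) (m j)"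
      unfolding good_def by blast
    obtain g where g: "\<not> good P g" "\<forall>k<Suc j. g k = m k"
      using bad_prefix by blast
    then have "g i = m i" "g j = m j"
      using ij(1) by simp_all
    with ij g(1) show False
      unfolding good_def by metis
  qed
  moreover have "size (m n) \<le> size (g n)" if "\<not> good P g" "\<forall>i<n. g i = m i" for g n
  proof -
    have "size (arg_min size (extends (map m [0..<n]))) \<le> size (g n)"
      by (rule arg_min_nat_le) (rule ext[OF that])
    then show ?thesis
      by (subst m)
  qed
  ultimately show thesis
    by (rule that)
qed

lemma bad_tails_splice:
  assumes bad: "\<not> good (list_emb Q) m" and nonempty: "\<And>n. m n \<noteq> []"
    and mono: "strict_mono \<phi>" and heads: "\<And>i j. i < j \<Longrightarrow> Q (hd (m (\<phi> i))) (hd (m (\<phi> j)))"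
  shows "\<not> good (list_emb Q) (\<lambda>k. if k < \<phi> 0 then m k else tl (m (\<phi> (k - \<phi> 0))))"
    (is "\<not> good _ ?g")
proof
  assume "good (list_emb Q) ?g"
  then obtain i j where ij: "i < j" and emb: "list_emb Q (?g i) (?g j)"
    unfolding good_def by blast
  have \<phi>_ge: "\<phi> 0 \<le> \<phi> k" for k
    using mono by (simp add: strict_mono_less_eq)
  have tl_emb: "list_emb Q xs (tl ys) \<Longrightarrow> ys \<noteq> [] \<Longrightarrow> list_emb Q xs ys" for xs ys
    by (cases ys) auto
  have "\<exists>a b. a < b \<and> list_emb Q (m a) (m b)"
  proof (cases "j < \<phi> 0")
    case True
    then have "list_emb Q (m i) (m j)"
      using ij emb by simp
    then show ?thesis
      using ij by blast
  next
    case j: False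
    show ?thesis
    proof (cases "i < \<phi> 0")
      case True
      then have "list_emb Q (m i) (m (\<phi> (j - \<phi> 0)))"
        using emb j nonempty tl_emb by auto
      moreover have "i < \<phi> (j - \<phi> 0)"
        using True \<phi>_ge[of "j - \<phi> 0"] by linarith
      ultimately show ?thesis
        by blast
    next
      case False
      define a b where "a = i - \<phi> 0" and "b = j - \<phi> 0"
      have ab: "a < b"
        using False ij unfolding a_def b_def by linarith
      have "list_emb Q (tl (m (\<phi> a))) (tl (m (\<phi> b)))"
        using emb False j unfolding a_def b_def by auto
      then have "list_emb Q (hd (m (\<phi> a)) # tl (m (\<phi> a))) (hd (m (\<phi> b)) # tl (m (\<phi> b)))"
        using heads[OF ab] by (rule list_emb_Cons2[rotated])
      then show ?thesis
        using nonempty strict_monoD[OF mono ab] by auto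
    qed
  qed
  then show False
    using bad unfolding good_def by blast
qed

theorem almost_full_on_list_emb:
  assumes "almost_full_on Q UNIV"
  shows "almost_full_on (list_emb Q) UNIV"
proof (rule ccontr)
  assume "\<not> almost_full_on (list_emb Q) UNIV"
  then obtain f where "\<not> good (list_emb Q) f"
    unfolding almost_full_on_def by blast
  then obtain m where bad: "\<not> good (list_emb Q) m"
    and minimal: "\<And>n g. \<not> good (list_emb Q) g \<Longrightarrow> (\<forall>i<n. g i = m i) \<Longrightarrow> length (m n) \<le> length (g n)"
    by (rule ex_minimal_bad_seq[where size = length]) auto
  have nonempty: "m n \<noteq> []" for n
  proof
    assume "m n = []"
    then have "list_emb Q (m n) (m (Suc n))"
      by simp
    with bad show False
      unfolding good_def by blast
  qed
  obtain \<phi> :: "nat \<Rightarrow> nat" where mono: "strict_mono \<phi>"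
    and heads: "\<And>i j. i < j \<Longrightarrow> Q (hd (m (\<phi> i))) (hd (m (\<phi> j)))"
    using almost_full_on_imp_homogeneous_subseq[OF assms, of "\<lambda>n. hd (m n)"] by blast
  define g where "g = (\<lambda>k. if k < \<phi> 0 then m k else tl (m (\<phi> (k - \<phi> 0))))"
  have "\<not> good (list_emb Q) g"
    unfolding g_def by (rule bad_tails_splice[OF bad nonempty mono heads])
  moreover have "\<forall>i<\<phi> 0. g i = m i"
    by (simp add: g_def)
  ultimately have "length (m (\<phi> 0)) \<le> length (g (\<phi> 0))"
    by (rule minimal)
  moreover have "length (g (\<phi> 0)) < length (m (\<phi> 0))"
    using nonempty[of "\<phi> 0"] by (simp add: g_def)
  ultimately show False
    by simp
qed

lemma ZI_finite_support: "u \<in> ZI c \<Longrightarrow> finite {x. u x \<noteq> 0}"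
  by (simp add: ZI_def)

lemma ZI_support_index_set: "u \<in> ZI c \<Longrightarrow> u x \<noteq> 0 \<Longrightarrow> x \<in> index_set c"
  unfolding ZI_def by (cases x) auto

lemma is_subgroup_add:
  assumes "is_subgroup H" "a \<in> H" "b \<in> H"
  shows "a + b \<in> H"
proof -
  have "0 - b \<in> H"
    using assms unfolding is_subgroup_def by blast
  then have "a - (0 - b) \<in> H"
    using assms unfolding is_subgroup_def by blast
  then show ?thesis
    by simp
qed

lemma ZI_support_subset:
  assumes "u \<in> ZI c" "\<And>x. v x \<noteq> 0 \<Longrightarrow> u x \<noteq> 0"
  shows "v \<in> ZI c"
proof -
  have "{x. v x \<noteq> 0} \<subseteq> {x. u x \<noteq> 0}"
    using assms(2) by blast
  then have "finite {x. v x \<noteq> 0}"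
    using ZI_finite_support[OF assms(1)] by (rule finite_subset)
  moreover have "x \<in> index_set c" if "v x \<noteq> 0" for x
    using ZI_support_index_set[OF assms(1) assms(2)[OF that]] .
  ultimately show ?thesis
    by (simp add: ZI_def)
qed

lemma ZI_diff:
  assumes "u \<in> ZI c" "v \<in> ZI c"
  shows "u - v \<in> ZI c"
proof -
  have "{x. (u - v) x \<noteq> 0} \<subseteq> {x. u x \<noteq> 0} \<union> {x. v x \<noteq> 0}"
    by auto
  then have "finite {x. (u - v) x \<noteq> 0}"
    using ZI_finite_support[OF assms(1)] ZI_finite_support[OF assms(2)]
    by (meson finite_UnI finite_subset)
  moreover have "x \<in> index_set c" if "(u - v) x \<noteq> 0" for x
  proof -
    have "u x \<noteq> 0 \<or> v x \<noteq> 0"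
      using that by auto
    then show ?thesis
      using ZI_support_index_set[OF assms(1)] ZI_support_index_set[OF assms(2)] by blast
  qed
  ultimately show ?thesis
    by (simp add: ZI_def)
qed

lemma ZI_nonnegI: "v \<in> ZI c \<Longrightarrow> (\<And>x. 0 \<le> v x) \<Longrightarrow> v \<in> ZI_nonneg c"
  by (simp add: ZI_nonneg_def)

lemma ZI_nonnegD: "v \<in> ZI_nonneg c \<Longrightarrow> v \<in> ZI c \<and> 0 \<le> v x"
  unfolding ZI_nonneg_def by (cases x) auto

section \<open>The conformal order modulo Sym is almost full\<close>

definition conformal_le :: "int \<Rightarrow> int \<Rightarrow> bool" where
  "conformal_le a b \<longleftrightarrow> (0 \<le> a \<and> a \<le> b) \<or> (b \<le> a \<and> a \<le> 0)"

lemma conformal_le_0 [simp]: "conformal_le 0 b"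
  by (auto simp: conformal_le_def)

lemma almost_full_on_conformal_le: "almost_full_on conformal_le UNIV"
proof -
  have "almost_full_on conformal_le {a. 0 \<le> a}"
    by (rule almost_full_on_map[OF almost_full_on_nat_le, of _ nat]) (auto simp: conformal_le_def)
  moreover have "almost_full_on conformal_le {a. a \<le> 0}"
    by (rule almost_full_on_map[OF almost_full_on_nat_le, of _ "\<lambda>a. nat (- a)"])
      (auto simp: conformal_le_def)
  moreover have "UNIV = {a::int. 0 \<le> a} \<union> {a. a \<le> 0}"
    by auto
  ultimately show ?thesis
    by (metis almost_full_on_Un)
qed

lemma almost_full_on_conformal_le_upto:
  "almost_full_on (\<lambda>a b. \<forall>j\<in>{1..n::nat}. conformal_le (a j) (b j)) UNIV"
proof (induction n)
  case 0
  show ?case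
    unfolding almost_full_on_def good_def by (intro allI impI exI[of _ 0] exI[of _ 1]) auto
next
  case (Suc n)
  have "almost_full_on (\<lambda>a b. conformal_le (a (Suc n)) (b (Suc n))) UNIV"
    by (rule almost_full_on_map[OF almost_full_on_conformal_le, of _ "\<lambda>a. a (Suc n)"]) auto
  from almost_full_on_conj[OF Suc this] show ?case
    by (rule almost_full_on_map[of _ _ _ id]) (auto simp: le_Suc_eq)
qed

definition conformal_le_vec :: "vec \<Rightarrow> vec \<Rightarrow> bool" where
  "conformal_le_vec u v \<longleftrightarrow> (\<forall>x. conformal_le (u x) (v x))"

lemma list_emb_imp_inj_on:
  assumes "list_emb P xs ys" "distinct xs" "distinct ys"
  shows "\<exists>h. inj_on h (set xs) \<and> (\<forall>x\<in>set xs. h x \<in> set ys \<and> P x (h x))"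
  using assms
proof (induction rule: list_emb.induct)
  case (list_emb_Nil ys)
  then show ?case
    by auto
next
  case (list_emb_Cons xs ys y)
  then show ?case
    by (metis distinct.simps(2) list.set_intros(2))
next
  case (list_emb_Cons2 x y xs ys)
  then obtain h where h: "inj_on h (set xs)" "\<forall>z\<in>set xs. h z \<in> set ys \<and> P z (h z)"
    by auto
  have "x \<notin> set xs" "y \<notin> set ys"
    using list_emb_Cons2.prems by auto
  then have "inj_on (h(x := y)) (set (x # xs)) \<and> (\<forall>z\<in>set (x # xs). (h(x := y)) z \<in> set (y # ys) \<and> P z ((h(x := y)) z))"
    using h list_emb_Cons2.hyps(1) by (auto simp: inj_on_def)
  then show ?case
    by blast
qed

lemma inj_on_extends_to_Sym:
  assumes fin: "finite S" and S: "S \<subseteq> {1..}" and inj: "inj_on h S" and hS: "h ` S \<subseteq> {1..}"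
  obtains \<sigma> where "\<sigma> \<in> Sym" "\<And>i. i \<in> S \<Longrightarrow> \<sigma> i = h i"
proof -
  define D where "D = S \<union> h ` S"
  have "finite D"
    using fin by (simp add: D_def)
  moreover have "card (D - S) = card (D - h ` S)"
    using fin inj by (simp add: D_def card_Diff_subset card_image)
  ultimately obtain g where g: "bij_betw g (D - S) (D - h ` S)"
    by (metis finite_Diff finite_same_card_bij)
  define \<sigma> where "\<sigma> = (\<lambda>x. if x \<in> S then h x else if x \<in> D then g x else x)"
  have "bij_betw (\<lambda>x. if x \<in> S then h x else g x) (S \<union> (D - S)) (h ` S \<union> (D - h ` S))"
    by (rule bij_betw_disjoint_Un) (use inj g in \<open>auto simp: inj_on_imp_bij_betw\<close>)
  moreover have "S \<union> (D - S) = D" "h ` S \<union> (D - h ` S) = D"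
    by (auto simp: D_def)
  moreover have "bij_betw \<sigma> D D \<longleftrightarrow> bij_betw (\<lambda>x. if x \<in> S then h x else g x) D D"
    by (rule bij_betw_cong) (simp add: \<sigma>_def)
  ultimately have "bij_betw \<sigma> D D"
    by simp
  then have "\<sigma> permutes D"
    by (rule bij_imp_permutes) (simp add: \<sigma>_def D_def)
  moreover have "D \<subseteq> {1..}"
    using S hS by (simp add: D_def)
  ultimately have "\<sigma> permutes {1..}"
    by (rule permutes_subset)
  moreover have "finite {i. \<sigma> i \<noteq> i}"
    by (rule finite_subset[OF _ \<open>finite D\<close>]) (auto simp: \<sigma>_def D_def)
  ultimately have "\<sigma> \<in> Sym"
    by (simp add: Sym_def)
  then show thesis
    by (rule that) (simp add: \<sigma>_def)
qed

definition col_support :: "vec \<Rightarrow> nat set" where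
  "col_support u = fst ` {x. u x \<noteq> 0}"

text \<open>Columns are tagged with their index, so that the list is distinct even if two columns agree
  and an embedding of column lists is an injection of column indices.\<close>

definition columns :: "vec \<Rightarrow> (nat \<times> (nat \<Rightarrow> int)) list" where
  "columns u = map (\<lambda>i. (i, \<lambda>j. u (i, j))) (sorted_list_of_set (col_support u))"

lemma finite_col_support: "u \<in> ZI c \<Longrightarrow> finite (col_support u)"
  unfolding col_support_def by (simp add: ZI_finite_support)

lemma col_support_subset:
  assumes "u \<in> ZI c"
  shows "col_support u \<subseteq> {1..}"
  using ZI_support_index_set[OF assms] unfolding col_support_def index_set_def by force

lemma set_columns: "u \<in> ZI c \<Longrightarrow> set (columns u) = (\<lambda>i. (i, \<lambda>j. u (i, j))) ` col_support u"
  unfolding columns_def by (simp add: finite_col_support)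

lemma distinct_columns: "u \<in> ZI c \<Longrightarrow> distinct (columns u)"
  unfolding columns_def by (simp add: finite_col_support distinct_map inj_on_def)

lemma list_emb_columns_imp_inj_on:
  assumes u: "u \<in> ZI c" and v: "v \<in> ZI c"
    and emb: "list_emb (\<lambda>p q. \<forall>j\<in>{1..c}. conformal_le (snd p j) (snd q j)) (columns u) (columns v)"
  obtains h where "inj_on h (col_support u)" "h ` col_support u \<subseteq> col_support v"
    "\<And>i j. i \<in> col_support u \<Longrightarrow> j \<in> {1..c} \<Longrightarrow> conformal_le (u (i, j)) (v (h i, j))"
proof -
  obtain H where H_inj: "inj_on H (set (columns u))"
    and H: "\<forall>p\<in>set (columns u). H p \<in> set (columns v) \<and> (\<forall>j\<in>{1..c}. conformal_le (snd p j) (snd (H p) j))"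
    using list_emb_imp_inj_on[OF emb distinct_columns[OF u] distinct_columns[OF v]] by blast
  define h where "h i = fst (H (i, \<lambda>j. u (i, j)))" for i
  have h: "h i \<in> col_support v \<and> H (i, \<lambda>j. u (i, j)) = (h i, \<lambda>j. v (h i, j))
      \<and> (\<forall>j\<in>{1..c}. conformal_le (u (i, j)) (v (h i, j)))" if "i \<in> col_support u" for i
  proof -
    have "(i, \<lambda>j. u (i, j)) \<in> set (columns u)"
      using set_columns[OF u] that by auto
    with H show ?thesis
      using set_columns[OF v] unfolding h_def by auto
  qed
  have "inj_on h (col_support u)"
  proof (rule inj_onI)
    fix i i' assume i: "i \<in> col_support u" "i' \<in> col_support u" "h i = h i'"
    then have "H (i, \<lambda>j. u (i, j)) = H (i', \<lambda>j. u (i', j))"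
      using h by metis
    moreover have "(i, \<lambda>j. u (i, j)) \<in> set (columns u)" "(i', \<lambda>j. u (i', j)) \<in> set (columns u)"
      using set_columns[OF u] i by auto
    ultimately show "i = i'"
      using H_inj by (auto dest: inj_onD)
  qed
  then show thesis
    using h by (intro that) auto
qed

lemma inj_on_columns_imp_Sym_conformal:
  assumes u: "u \<in> ZI c" and v: "v \<in> ZI c"
    and inj: "inj_on h (col_support u)" and h: "h ` col_support u \<subseteq> col_support v"
    and conf: "\<And>i j. i \<in> col_support u \<Longrightarrow> j \<in> {1..c} \<Longrightarrow> conformal_le (u (i, j)) (v (h i, j))"
  shows "\<exists>\<sigma>\<in>Sym. conformal_le_vec (act \<sigma> u) v"
proof -
  obtain \<sigma> where \<sigma>: "\<sigma> \<in> Sym" and \<sigma>_h: "\<And>i. i \<in> col_support u \<Longrightarrow> \<sigma> i = h i"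
    using inj_on_extends_to_Sym[OF finite_col_support[OF u] col_support_subset[OF u] inj]
      h col_support_subset[OF v] by blast
  have perm: "\<sigma> permutes {1..}"
    using \<sigma> by (simp add: Sym_def)
  have "conformal_le (u (inv \<sigma> k, j)) (v (k, j))" for k j
  proof (cases "u (inv \<sigma> k, j) = 0")
    case False
    then have "inv \<sigma> k \<in> col_support u" "j \<in> {1..c}"
      using ZI_support_index_set[OF u False] by (force simp: col_support_def index_set_def)+
    then show ?thesis
      using conf \<sigma>_h permutes_inverses(1)[OF perm] by metis
  qed simp
  then show ?thesis
    using \<sigma> by (auto simp: conformal_le_vec_def act_def)
qed

theorem almost_full_on_Sym_conformal:
  "almost_full_on (\<lambda>u v. \<exists>\<sigma>\<in>Sym. conformal_le_vec (act \<sigma> u) v) (ZI c)"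
proof (rule almost_full_on_map[of _ UNIV _ columns])
  show "almost_full_on (list_emb (\<lambda>p q. \<forall>j\<in>{1..c}. conformal_le (snd p j) (snd q j))) UNIV"
    by (intro almost_full_on_list_emb almost_full_on_map[OF almost_full_on_conformal_le_upto, of _ snd])
      auto
next
  fix u v
  assume "u \<in> ZI c" "v \<in> ZI c"
    and "list_emb (\<lambda>p q. \<forall>j\<in>{1..c}. conformal_le (snd p j) (snd q j)) (columns u) (columns v)"
  then obtain h where "inj_on h (col_support u)" "h ` col_support u \<subseteq> col_support v"
    "\<And>i j. i \<in> col_support u \<Longrightarrow> j \<in> {1..c} \<Longrightarrow> conformal_le (u (i, j)) (v (h i, j))"
    by (rule list_emb_columns_imp_inj_on) blast
  with \<open>u \<in> ZI c\<close> \<open>v \<in> ZI c\<close> show "\<exists>\<sigma>\<in>Sym. conformal_le_vec (act \<sigma> u) v"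
    by (rule inj_on_columns_imp_Sym_conformal)
qed simp

section \<open>Positive and negative parts\<close>

definition pos_part :: "vec \<Rightarrow> vec" where
  "pos_part v = (\<lambda>x. max (v x) 0)"

definition neg_part :: "vec \<Rightarrow> vec" where
  "neg_part v = (\<lambda>x. max (- v x) 0)"

definition l1_norm :: "vec \<Rightarrow> nat" where
  "l1_norm v = (\<Sum>x | v x \<noteq> 0. nat \<bar>v x\<bar>)"

lemma pos_part_minus_neg_part: "pos_part v - neg_part v = v"
  by (auto simp: pos_part_def neg_part_def fun_eq_iff)

lemma pos_part_ZI_nonneg: "v \<in> ZI c \<Longrightarrow> pos_part v \<in> ZI_nonneg c"
  by (rule ZI_nonnegI, rule ZI_support_subset[of v]) (auto simp: pos_part_def)

lemma neg_part_ZI_nonneg: "v \<in> ZI c \<Longrightarrow> neg_part v \<in> ZI_nonneg c"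
  by (rule ZI_nonnegI, rule ZI_support_subset[of v]) (auto simp: neg_part_def)

lemma min_plus_pos_part_diff: "(\<lambda>z. min (x z) (m z)) + pos_part (x - m) = x"
  by (auto simp: pos_part_def fun_eq_iff)

lemma min_plus_neg_part_diff: "(\<lambda>z. min (x z) (m z)) + neg_part (x - m) = m"
  by (auto simp: neg_part_def fun_eq_iff)

lemma conformal_le_vecD: "conformal_le_vec g l \<Longrightarrow> conformal_le (g x) (l x)"
  unfolding conformal_le_vec_def by blast

lemma conformal_le_vec_trans: "conformal_le_vec a b \<Longrightarrow> conformal_le_vec b d \<Longrightarrow> conformal_le_vec a d"
  unfolding conformal_le_vec_def conformal_le_def by (meson order_trans)

lemma conformal_le_vec_diff: "conformal_le_vec g l \<Longrightarrow> conformal_le_vec (l - g) l"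
  unfolding conformal_le_vec_def conformal_le_def by auto

lemma conformal_le_vec_pos_part:
  assumes "conformal_le_vec g l"
  shows "pos_part l = pos_part g + pos_part (l - g)"
proof
  fix x
  from conformal_le_vecD[OF assms, of x] show "pos_part l x = (pos_part g + pos_part (l - g)) x"
    by (auto simp: conformal_le_def pos_part_def)
qed

lemma conformal_le_vec_neg_part:
  assumes "conformal_le_vec g l"
  shows "neg_part l = neg_part g + neg_part (l - g)"
proof
  fix x
  from conformal_le_vecD[OF assms, of x] show "neg_part l x = (neg_part g + neg_part (l - g)) x"
    by (auto simp: conformal_le_def neg_part_def)
qed

lemma conformal_le_vec_diff_nonneg:
  assumes "v \<in> ZI_nonneg c" "w \<in> ZI_nonneg c" "g \<in> ZI c" "conformal_le_vec g (v - w)"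
  shows "v - g \<in> ZI_nonneg c" "v - pos_part g \<in> ZI_nonneg c"
proof -
  have "0 \<le> v x - g x \<and> 0 \<le> v x - pos_part g x" for x
  proof -
    have "conformal_le (g x) (v x - w x)" "0 \<le> v x" "0 \<le> w x"
      using conformal_le_vecD[OF assms(4)] ZI_nonnegD[OF assms(1)] ZI_nonnegD[OF assms(2)] by auto
    then show ?thesis
      by (auto simp: conformal_le_def pos_part_def)
  qed
  moreover have "v - g \<in> ZI c" "v - pos_part g \<in> ZI c"
    using assms ZI_diff ZI_nonnegD pos_part_ZI_nonneg by blast+
  ultimately show "v - g \<in> ZI_nonneg c" "v - pos_part g \<in> ZI_nonneg c"
    by (simp_all add: ZI_nonnegI)
qed

lemma l1_norm_diff_less:
  assumes l: "l \<in> ZI c" and g: "conformal_le_vec g l" "g \<noteq> 0"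
  shows "l1_norm (l - g) < l1_norm l"
proof -
  define S where "S = {x. l x \<noteq> 0}"
  have conf: "conformal_le (g x) (l x)" for x
    using g(1) by (rule conformal_le_vecD)
  have fin: "finite S"
    using ZI_finite_support[OF l] by (simp add: S_def)
  have "l1_norm (l - g) = (\<Sum>x\<in>S. nat \<bar>(l - g) x\<bar>)"
    unfolding l1_norm_def
  proof (intro sum.mono_neutral_left[OF fin])
    show "{x. (l - g) x \<noteq> 0} \<subseteq> S"
    proof
      fix x
      assume "x \<in> {x. (l - g) x \<noteq> 0}"
      with conf[of x] show "x \<in> S"
        by (auto simp: S_def conformal_le_def)
    qed
  qed auto
  also have "\<dots> < (\<Sum>x\<in>S. nat \<bar>l x\<bar>)"
  proof (rule sum_strict_mono_ex1[OF fin])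
    show "\<forall>x\<in>S. nat \<bar>(l - g) x\<bar> \<le> nat \<bar>l x\<bar>"
    proof
      fix x
      from conf[of x] show "nat \<bar>(l - g) x\<bar> \<le> nat \<bar>l x\<bar>"
        by (auto simp: conformal_le_def)
    qed
    obtain x where "g x \<noteq> 0"
      using g(2) by (auto simp: fun_eq_iff)
    with conf[of x] show "\<exists>x\<in>S. nat \<bar>(l - g) x\<bar> < nat \<bar>l x\<bar>"
      unfolding S_def conformal_le_def by (intro bexI[of _ x]) auto
  qed
  also have "\<dots> = l1_norm l"
    by (simp add: l1_norm_def S_def)
  finally show ?thesis .
qed

section \<open>Term orders\<close>

lemma term_order_irrefl: "term_order c lt \<Longrightarrow> \<not> lt u u"
  unfolding term_order_def by blast

lemma term_order_trans: "term_order c lt \<Longrightarrow> lt u v \<Longrightarrow> lt v w \<Longrightarrow> lt u w"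
  unfolding term_order_def by blast

lemma term_order_total:
  "term_order c lt \<Longrightarrow> u \<in> ZI_nonneg c \<Longrightarrow> v \<in> ZI_nonneg c \<Longrightarrow> \<not> lt u v \<Longrightarrow> v = u \<or> lt v u"
  unfolding term_order_def by blast

lemma term_order_wf: "term_order c lt \<Longrightarrow> wfP lt"
  unfolding term_order_def by blast

lemma term_order_add:
  assumes "term_order c lt" "lt u v" "w \<in> ZI_nonneg c"
  shows "lt (w + u) (w + v)"
proof -
  have "u \<in> ZI_nonneg c" "v \<in> ZI_nonneg c"
    using assms(1,2) unfolding term_order_def by blast+
  then have "lt (u + w) (v + w)"
    using assms unfolding term_order_def by blast
  then show ?thesis
    by (simp add: add.commute)
qed

lemma term_order_add_not_less:
  assumes lt: "term_order c lt"
    and nonneg: "p \<in> ZI_nonneg c" "q \<in> ZI_nonneg c" "r \<in> ZI_nonneg c" "s \<in> ZI_nonneg c"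
    and "\<not> lt p q" "\<not> lt r s"
  shows "\<not> lt (p + r) (q + s)"
proof
  assume less: "lt (p + r) (q + s)"
  have "q = p \<or> lt q p" "s = r \<or> lt s r"
    using term_order_total[OF lt] assms by blast+
  then have "q + s = p + s \<or> lt (q + s) (p + s)" "p + s = p + r \<or> lt (p + s) (p + r)"
    using term_order_add[OF lt _ nonneg(4), of q p] term_order_add[OF lt _ nonneg(1), of s r]
    by (auto simp: add.commute)
  then have "q + s = p + r \<or> lt (q + s) (p + r)"
    using term_order_trans[OF lt] by auto
  then have "lt (p + r) (p + r)"
    using less term_order_trans[OF lt] by auto
  then show False
    using term_order_irrefl[OF lt] by blast
qed

text \<open>lt (neg_part l) (pos_part l) says that the binomial with exponents pos_part l and
  neg_part l has leading term pos_part l.\<close>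

lemma term_order_conformal_summand_pos_lead:
  assumes lt: "term_order c lt" and "l \<in> ZI c" "g \<in> ZI c" and g: "conformal_le_vec g l"
    and "lt (neg_part l) (pos_part l)"
  shows "lt (neg_part g) (pos_part g) \<or> lt (neg_part (l - g)) (pos_part (l - g))"
proof (rule ccontr)
  assume "\<not> ?thesis"
  then have "\<not> lt (neg_part g + neg_part (l - g)) (pos_part g + pos_part (l - g))"
    using assms(2,3) by (intro term_order_add_not_less[OF lt])
      (simp_all add: pos_part_ZI_nonneg neg_part_ZI_nonneg ZI_diff)
  with assms(5) show False
    by (simp add: conformal_le_vec_pos_part[OF g] conformal_le_vec_neg_part[OF g])
qed

lemma term_order_diff_pos_lead:
  assumes lt: "term_order c lt" and "x \<in> ZI_nonneg c" "m \<in> ZI_nonneg c" "lt m x"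
  shows "lt (neg_part (x - m)) (pos_part (x - m))"
proof (rule ccontr)
  define k where "k = (\<lambda>z. min (x z) (m z))"
  have "k \<in> ZI_nonneg c"
  proof (rule ZI_nonnegI)
    show "k \<in> ZI c"
      by (rule ZI_support_subset[of x]) (use assms(2,3) ZI_nonnegD in \<open>force simp: k_def\<close>)+
    show "0 \<le> k z" for z
      using assms(2,3) ZI_nonnegD by (simp add: k_def)
  qed
  moreover have "x - m \<in> ZI c"
    using assms(2,3) ZI_nonnegD ZI_diff by blast
  moreover assume "\<not> lt (neg_part (x - m)) (pos_part (x - m))"
  ultimately have "\<not> lt (k + neg_part (x - m)) (k + pos_part (x - m))"
    using term_order_irrefl[OF lt]
    by (intro term_order_add_not_less[OF lt]) (simp_all add: pos_part_ZI_nonneg neg_part_ZI_nonneg)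
  then show False
    using \<open>lt m x\<close> unfolding k_def min_plus_pos_part_diff min_plus_neg_part_diff by blast
qed

lemma term_order_diff_less:
  assumes lt: "term_order c lt" and "lt (neg_part g) (pos_part g)" "x - pos_part g \<in> ZI_nonneg c"
  shows "lt (x - g) x"
proof -
  have "lt ((x - pos_part g) + neg_part g) ((x - pos_part g) + pos_part g)"
    using assms by (rule term_order_add)
  moreover have "(x - pos_part g) + neg_part g = x - g"
    using pos_part_minus_neg_part[of g] by (simp add: algebra_simps)
  ultimately show ?thesis
    by simp
qed

section \<open>Conformal covers of a lattice\<close>

locale conformal_cover =
  fixes c :: nat and L G :: "vec set"
  assumes lattice: "is_lattice c L"
    and G_subset: "G \<subseteq> L"
    and zero_notin_G: "0 \<notin> G"
    and covers: "\<And>l. l \<in> L \<Longrightarrow> l \<noteq> 0 \<Longrightarrow> \<exists>g\<in>G. conformal_le_vec g l"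
begin

lemma L_subset: "L \<subseteq> ZI c"
  using lattice by (simp add: is_lattice_def)

lemma L_subgroup: "is_subgroup L"
  using lattice by (simp add: is_lattice_def)

lemma L_diff: "a \<in> L \<Longrightarrow> b \<in> L \<Longrightarrow> a - b \<in> L"
  using L_subgroup unfolding is_subgroup_def by blast

lemma fiber_diff:
  assumes "v \<in> fiber c L u" "w \<in> fiber c L u"
  shows "v - w \<in> L"
proof -
  have "(u - w) - (u - v) \<in> L"
    using assms by (intro L_diff[of "u - w" "u - v"]) (simp_all add: fiber_def)
  then show ?thesis
    by (simp add: algebra_simps)
qed

lemma fiber_step:
  assumes v: "v \<in> fiber c L u" and w: "w \<in> fiber c L u"
    and g: "g \<in> G" "conformal_le_vec g (v - w)"
  shows "v - g \<in> fiber c L u"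
proof -
  have "v - g \<in> ZI_nonneg c"
    using v w g G_subset L_subset by (intro conformal_le_vec_diff_nonneg(1)) (auto simp: fiber_def)
  moreover have "(u - v) + g \<in> L"
    using v g G_subset L_subgroup by (intro is_subgroup_add) (auto simp: fiber_def)
  ultimately show ?thesis
    by (simp add: fiber_def algebra_simps)
qed

lemma l1_norm_step: "l \<in> L \<Longrightarrow> g \<in> G \<Longrightarrow> conformal_le_vec g l \<Longrightarrow> l1_norm (l - g) < l1_norm l"
  using L_subset zero_notin_G by (intro l1_norm_diff_less) auto

lemma gen_subgroup_eq: "gen_subgroup G = L"
proof
  show "gen_subgroup G \<subseteq> L"
    unfolding gen_subgroup_def using L_subgroup G_subset by blast
  have "l \<in> H" if H: "is_subgroup H" "G \<subseteq> H" and "l \<in> L" for H l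
    using \<open>l \<in> L\<close>
  proof (induction "l1_norm l" arbitrary: l rule: less_induct)
    case less
    show ?case
    proof (cases "l = 0")
      case True
      then show ?thesis
        using H(1) by (simp add: is_subgroup_def)
    next
      case False
      then obtain g where g: "g \<in> G" "conformal_le_vec g l"
        using covers less.prems by blast
      have "l - g \<in> H"
        using g less by (intro less.hyps l1_norm_step L_diff) (auto simp: G_subset[THEN subsetD])
      then have "(l - g) + g \<in> H"
        using H g by (intro is_subgroup_add) auto
      then show ?thesis
        by simp
    qed
  qed
  then show "L \<subseteq> gen_subgroup G"
    unfolding gen_subgroup_def by blast
qed

lemma generating_set: "is_generating_set c L G"
  unfolding is_generating_set_def using G_subset gen_subgroup_eq by blast

lemma fiber_connected:
  assumes "v \<in> fiber c L u" "w \<in> fiber c L u"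
  shows "(v, w) \<in> {(x, y). x \<in> fiber c L u \<and> y \<in> fiber c L u \<and> (x - y \<in> G \<or> y - x \<in> G)}\<^sup>*"
    (is "_ \<in> ?R\<^sup>*")
  using assms(1)
proof (induction "l1_norm (v - w)" arbitrary: v rule: less_induct)
  case less
  show ?case
  proof (cases "v = w")
    case False
    have "v - w \<in> L"
      using less.prems assms(2) by (rule fiber_diff)
    moreover obtain g where g: "g \<in> G" "conformal_le_vec g (v - w)"
      using covers[OF \<open>v - w \<in> L\<close>] False by auto
    ultimately have "l1_norm ((v - w) - g) < l1_norm (v - w)"
      by (intro l1_norm_step)
    moreover have "(v - w) - g = (v - g) - w"
      by (simp add: algebra_simps)
    ultimately have "l1_norm ((v - g) - w) < l1_norm (v - w)"
      by simp
    moreover have step: "v - g \<in> fiber c L u"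
      using less.prems assms(2) g by (rule fiber_step)
    ultimately have "(v - g, w) \<in> ?R\<^sup>*"
      by (rule less.hyps)
    moreover have "(v, v - g) \<in> ?R"
      using less.prems step g(1) by simp
    ultimately show ?thesis
      by (rule converse_rtrancl_into_rtrancl[rotated])
  qed simp
qed

lemma markov_basis: "is_markov_basis c L G"
  unfolding is_markov_basis_def
proof (intro conjI ballI)
  show "G \<subseteq> L"
    by (rule G_subset)
  fix u v w
  assume "v \<in> fiber c L u" "w \<in> fiber c L u"
  then show "(v, w) \<in> {(x, y). x \<in> fiber c L u \<and> y \<in> fiber c L u \<and> (x - y \<in> G \<or> y - x \<in> G)}\<^sup>*"
    by (rule fiber_connected)
qed

context
  fixes lt :: "vec \<Rightarrow> vec \<Rightarrow> bool"
  assumes lt: "term_order c lt"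
begin

lemma pos_lead_cover:
  "l \<in> L \<Longrightarrow> lt (neg_part l) (pos_part l) \<Longrightarrow> \<exists>g\<in>G. conformal_le_vec g l \<and> lt (neg_part g) (pos_part g)"
proof (induction "l1_norm l" arbitrary: l rule: less_induct)
  case less
  have "l \<noteq> 0"
    using less.prems(2) term_order_irrefl[OF lt] by (auto simp: pos_part_def neg_part_def)
  then obtain g where g: "g \<in> G" "conformal_le_vec g l"
    using covers less.prems(1) by blast
  have "g \<in> ZI c" "l \<in> ZI c"
    using g(1) less.prems(1) G_subset L_subset by auto
  then consider "lt (neg_part g) (pos_part g)" | "lt (neg_part (l - g)) (pos_part (l - g))"
    using term_order_conformal_summand_pos_lead[OF lt _ _ g(2) less.prems(2)] by blast
  then show ?case
  proof cases
    case 1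
    then show ?thesis
      using g by blast
  next
    case 2
    moreover have "l - g \<in> L"
      using less.prems(1) g(1) G_subset by (intro L_diff) auto
    ultimately obtain g' where "g' \<in> G" "conformal_le_vec g' (l - g)" "lt (neg_part g') (pos_part g')"
      using less.hyps[OF l1_norm_step[OF less.prems(1) g]] by blast
    then show ?thesis
      using conformal_le_vec_trans conformal_le_vec_diff[OF g(2)] by blast
  qed
qed

lemma groebner_descent:
  assumes m: "m \<in> fiber c L u" and m_min: "\<forall>v\<in>fiber c L u. v \<noteq> m \<longrightarrow> lt m v"
    and "x \<in> fiber c L u"
  shows "(x, m) \<in> {(x, y). x \<in> fiber c L u \<and> y \<in> fiber c L u \<and> (x - y \<in> G \<or> y - x \<in> G) \<and> lt y x}\<^sup>*"
    (is "_ \<in> ?R\<^sup>*")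
  using term_order_wf[OF lt] \<open>x \<in> fiber c L u\<close>
proof (induction x rule: wfp_induct_rule)
  case (less x)
  show ?case
  proof (cases "x = m")
    case False
    have x: "x \<in> ZI_nonneg c" and m': "m \<in> ZI_nonneg c"
      using less.prems m by (simp_all add: fiber_def)
    have "lt (neg_part (x - m)) (pos_part (x - m))"
      using m_min less.prems False by (intro term_order_diff_pos_lead[OF lt x m']) auto
    then obtain g where g: "g \<in> G" "conformal_le_vec g (x - m)" "lt (neg_part g) (pos_part g)"
      using pos_lead_cover fiber_diff[OF less.prems m] by blast
    have step: "x - g \<in> fiber c L u"
      using less.prems m g(1,2) by (rule fiber_step)
    have "x - pos_part g \<in> ZI_nonneg c"
      using x m' g(1,2) G_subset L_subset by (intro conformal_le_vec_diff_nonneg(2)) auto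
    then have less_x: "lt (x - g) x"
      using g(3) by (intro term_order_diff_less[OF lt])
    then have "(x - g, m) \<in> ?R\<^sup>*"
      using step by (rule less.IH)
    moreover have "(x, x - g) \<in> ?R"
      using less.prems step g(1) less_x by simp
    ultimately show ?thesis
      by (rule converse_rtrancl_into_rtrancl[rotated])
  qed simp
qed

lemma groebner_basis: "is_groebner_basis c lt L G"
  unfolding is_groebner_basis_def
proof (intro conjI ballI impI)
  show "G \<subseteq> L"
    by (rule G_subset)
  fix u m
  assume u: "u \<in> ZI_nonneg c" and "m \<in> fiber c L u" "\<forall>v\<in>fiber c L u. v \<noteq> m \<longrightarrow> lt m v"
  moreover have "u \<in> fiber c L u"
    using u L_subgroup by (simp add: fiber_def is_subgroup_def)
  ultimately show "(u, m) \<in> {(x, y). x \<in> fiber c L u \<and> y \<in> fiber c L u \<and> (x - y \<in> G \<or> y - x \<in> G) \<and> lt y x}\<^sup>*"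
    by (intro groebner_descent)
qed

end

lemma universal_groebner_basis: "is_universal_groebner_basis c L G"
  unfolding is_universal_groebner_basis_def using groebner_basis by blast

end

section \<open>Finite equivariant bases\<close>

lemma act_eq_0D:
  assumes "\<sigma> \<in> Sym" "act \<sigma> b = 0"
  shows "b = 0"
proof
  fix x :: "nat \<times> nat"
  obtain i j where x: "x = (i, j)"
    by (cases x)
  have "\<sigma> permutes {1..}"
    using assms(1) by (simp add: Sym_def)
  then have "act \<sigma> b (\<sigma> i, j) = b (i, j)"
    unfolding act_def by (simp add: permutes_inverses(2))
  then show "b x = 0 x"
    using assms(2) x by simp
qed

lemma sym_orbit_subset: "sym_invariant L \<Longrightarrow> B \<subseteq> L \<Longrightarrow> sym_orbit B \<subseteq> L"
  unfolding sym_invariant_def sym_orbit_def by blast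

lemma ex_finite_Sym_orbit_conformal_cover:
  assumes L: "is_lattice c L" "sym_invariant L"
  obtains B where "finite B" "conformal_cover c L (sym_orbit B)"
proof -
  have "almost_full_on (\<lambda>u v. \<exists>\<sigma>\<in>Sym. conformal_le_vec (act \<sigma> u) v) (L - {0})"
    using almost_full_on_Sym_conformal
    by (rule almost_full_on_map[of _ _ _ id]) (use L in \<open>auto simp: is_lattice_def\<close>)
  then obtain B where B: "finite B" "B \<subseteq> L - {0}"
    and B_cover: "\<And>l. l \<in> L - {0} \<Longrightarrow> \<exists>b\<in>B. \<exists>\<sigma>\<in>Sym. conformal_le_vec (act \<sigma> b) l"
    by (rule almost_full_on_finite_basis) blast
  have "conformal_cover c L (sym_orbit B)"
  proof
    show "is_lattice c L"
      by (rule L(1))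
    show "sym_orbit B \<subseteq> L"
      using L(2) B(2) by (intro sym_orbit_subset) auto
    show "0 \<notin> sym_orbit B"
      using B(2) act_eq_0D unfolding sym_orbit_def by fastforce
    show "\<exists>g\<in>sym_orbit B. conformal_le_vec g l" if "l \<in> L" "l \<noteq> 0" for l
      using B_cover[of l] that unfolding sym_orbit_def by blast
  qed
  with B(1) show thesis
    by (rule that)
qed

theorem corollary4p3:
  fixes c :: nat and L :: "vec set"
  assumes "1 \<le> c" and "is_lattice c L" and "sym_invariant L"
  shows "(\<exists>B. finite B \<and> is_universal_groebner_basis c L (sym_orbit B))
       \<and> (\<forall>lt. term_order c lt \<longrightarrow> (\<exists>B. finite B \<and> is_groebner_basis c lt L (sym_orbit B)))
       \<and> (\<exists>B. finite B \<and> is_markov_basis c L (sym_orbit B))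
       \<and> (\<exists>B. finite B \<and> is_generating_set c L (sym_orbit B))"
proof -
  obtain B where "finite B" and cover: "conformal_cover c L (sym_orbit B)"
    using assms(2,3) by (rule ex_finite_Sym_orbit_conformal_cover)
  interpret conformal_cover c L "sym_orbit B"
    by (fact cover)
  show ?thesis
    using \<open>finite B\<close> universal_groebner_basis groebner_basis markov_basis generating_set by blast
qed

end
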